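(* Let $M$ be a $4$-dimensional manifold with local coordinates $(x^1,x^2,x^3,x^4)$ and coordinate frame $e_i=\partial/\partial x^i$. Let $g$ be a Riemannian metric whose components $g_{ij}=g(e_i,e_j)$ are \[(g_{ij})=\begin{pmatrix} A&B&C&B\\ B&A&B&C\\ C&B&A&B\\ B&C&B&A\end{pmatrix},\] where $A,B,C$ are smooth functions with $A>C>B>0$. Let $Q$ be the $(1,1)$-tensor with components $Q_j^k$ given by the matrix with rows $(0,1,0,0),(0,0,1,0),(0,0,0,1),(1,0,0,0)$, and let $P=Q^2$, whose component matrix $(P_j^k)$ has rows $(0,0,1,0),(0,0,0,1),(1,0,0,0),(0,1,0,0)$. Then $(M,g,P)$ is a Riemannian almost product manifold belonging to the class $\mathcal{W}_1\oplus\mathcal{W}_2$, i.e. the tensor $F(x,y,z)=g((\nabla_xP)y,z)$ satisfies \[F(x,y,Pz)+F(y,z,Px)+F(z,x,Py)=0\] for all vector fields $x,y,z$ (equivalently, the Nijenhuis tensor of $P$ vanishes).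
   Context: $\nabla$ denotes the Levi-Civita connection of $g$. One has $Q^4=\mathrm{id}$, $Q^2\neq\pm\mathrm{id}$, $g(Qx,Qy)=g(x,y)$, hence $P^2=\mathrm{id}$, $P\neq\pm\mathrm{id}$, $g(Px,Py)=g(x,y)$, $\mathrm{tr}P=0$. In the Staikova–Gribachev classification of such manifolds, the class $\mathcal{W}_1\oplus\mathcal{W}_2$ (Riemannian product manifolds) is characterized by $F(x,y,Pz)+F(y,z,Px)+F(z,x,Py)=0$. *)

theory Defs
  imports "HOL-Analysis.Analysis"
begin

text \<open>Local coordinate model: the coordinate domain of M is an open set U in R^4,
  the coordinate frame e_1..e_4 is the standard basis (axis i 1), and indices run
  over the 4-element type 4.\<close>

definition pd :: "4 \<Rightarrow> (real^4 \<Rightarrow> real) \<Rightarrow> real^4 \<Rightarrow> real" where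
  "pd i f p = frechet_derivative f (at p) (axis i 1)"

fun Ck :: "nat \<Rightarrow> (real^4) set \<Rightarrow> (real^4 \<Rightarrow> real) \<Rightarrow> bool" where
  "Ck 0 U f = continuous_on U f"
| "Ck (Suc k) U f = (f differentiable_on U \<and> (\<forall>i. Ck k U (pd i f)))"

definition smooth_fun_on :: "(real^4) set \<Rightarrow> (real^4 \<Rightarrow> real) \<Rightarrow> bool" where
  "smooth_fun_on U f = (\<forall>k. Ck k U f)"

definition gmat :: "(real^4 \<Rightarrow> real) \<Rightarrow> (real^4 \<Rightarrow> real) \<Rightarrow> (real^4 \<Rightarrow> real) \<Rightarrow> real^4 \<Rightarrow> real^4^4" where
  "gmat A B C p = (\<chi> i j. if i = j then A p else if j = i + 2 then C p else B p)"

definition gval :: "(real^4 \<Rightarrow> real^4^4) \<Rightarrow> real^4 \<Rightarrow> real^4 \<Rightarrow> real^4 \<Rightarrow> real" where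
  "gval G p x y = (\<Sum>i\<in>UNIV. \<Sum>j\<in>UNIV. x$i * G p $ i $ j * y$j)"

text \<open>Christoffel symbols of the first kind Gamma_{ij,l} = g(nabla_{e_i} e_j, e_l)
  and of the second kind Gamma^m_{ij} of the Levi-Civita connection.\<close>
definition chr1 :: "(real^4 \<Rightarrow> real^4^4) \<Rightarrow> real^4 \<Rightarrow> 4 \<Rightarrow> 4 \<Rightarrow> 4 \<Rightarrow> real" where
  "chr1 G p i j l = (pd i (\<lambda>q. G q $ j $ l) p + pd j (\<lambda>q. G q $ i $ l) p
                     - pd l (\<lambda>q. G q $ i $ j) p) / 2"

definition chr2 :: "(real^4 \<Rightarrow> real^4^4) \<Rightarrow> real^4 \<Rightarrow> 4 \<Rightarrow> 4 \<Rightarrow> 4 \<Rightarrow> real" where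
  "chr2 G p m i j = (\<Sum>l\<in>UNIV. matrix_inv (G p) $ m $ l * chr1 G p i j l)"

definition LC :: "(real^4 \<Rightarrow> real^4^4) \<Rightarrow> real^4 \<Rightarrow> real^4 \<Rightarrow> (real^4 \<Rightarrow> real^4) \<Rightarrow> real^4" where
  "LC G p x Y = (\<chi> m. \<Sum>i\<in>UNIV. x$i * (pd i (\<lambda>q. Y q $ m) p
                      + (\<Sum>j\<in>UNIV. chr2 G p m i j * Y p $ j)))"

text \<open>A (1,1)-tensor with constant components T $ j $ k = T_j^k, acting by
  T e_j = sum_k T_j^k e_k, i.e. (T x)^k = sum_j x^j T_j^k.\<close>
definition tact :: "real^4^4 \<Rightarrow> real^4 \<Rightarrow> real^4" where
  "tact T x = x v* T"

definition Qmat :: "real^4^4" where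
  "Qmat = (\<chi> j k. if k = j + 1 then 1 else 0)"

definition Pmat :: "real^4^4" where
  "Pmat = Qmat ** Qmat"

text \<open>F(x,y,z) = g((nabla_x P) y, z), where (nabla_x P) Y = nabla_x (P Y) - P (nabla_x Y),
  evaluated with Y the constant-coefficient extension of y (F is tensorial).\<close>
definition Ften :: "(real^4 \<Rightarrow> real^4^4) \<Rightarrow> real^4^4 \<Rightarrow> real^4 \<Rightarrow> real^4 \<Rightarrow> real^4 \<Rightarrow> real^4 \<Rightarrow> real" where
  "Ften G T p x y z = gval G p (LC G p x (\<lambda>q. tact T y) - tact T (LC G p x (\<lambda>q. y))) z"

end

theory Submission
  imports Defs
begin

text \<open>The metric is a circulant matrix that commutes with the permutation matrix P, so P is an
  isometry; the same holds for every partial derivative of the metric, since it has the same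
  circulant shape. For coordinate fields the Koszul formula gives
  F(x,y,z) = K(x,Py,z) - K(x,y,Pz) with K(x,y,z) = (h(x,y,z) + h(y,x,z) - h(z,x,y))/2 and
  h(w,u,v) = (\<partial>_w g)(u,v). Once h is symmetric in u, v and P is self-adjoint for h(w,-,-),
  the cyclic sum of F(x,y,Pz) cancels term by term. Only the pointwise inequalities between A, B
  and C enter: the partial derivatives of A, B, C are used merely as numbers.\<close>

lemma Pmat_eq: "Pmat = (\<chi> j k. if k = j + 2 then 1 else 0)"
  unfolding Pmat_def Qmat_def matrix_matrix_mult_def
  by (simp add: vec_eq_iff forall_4 sum_4)

lemma tact_Pmat_nth [simp]:
  "tact Pmat x $ 1 = x $ 3" "tact Pmat x $ 2 = x $ 4"
  "tact Pmat x $ 3 = x $ 1" "tact Pmat x $ 4 = x $ 2"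
  by (simp_all add: tact_def vector_matrix_mult_def Pmat_eq sum_4)

lemma tact_Pmat_involutive [simp]: "tact Pmat (tact Pmat x) = x"
  by (simp add: vec_eq_iff forall_4)

lemma Pmat_squared: "Pmat ** Pmat = mat 1"
  by (simp add: Pmat_eq matrix_matrix_mult_def mat_def vec_eq_iff forall_4 sum_4)

lemma trace_Pmat: "trace Pmat = 0"
  by (simp add: trace_def sum_4 Pmat_eq)

lemma Pmat_neq_pm_identity: "Pmat \<noteq> mat 1" "Pmat \<noteq> - mat 1"
proof -
  have "Pmat $ 1 $ 1 \<noteq> (mat 1 :: real^4^4) $ 1 $ 1" "Pmat $ 1 $ 1 \<noteq> (- mat 1 :: real^4^4) $ 1 $ 1"
    by (simp_all add: Pmat_eq mat_def)
  then show "Pmat \<noteq> mat 1" "Pmat \<noteq> - mat 1"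
    by metis+
qed

lemma gval_gmat_commute: "gval (gmat A B C) p x y = gval (gmat A B C) p y x"
  by (simp add: gval_def gmat_def sum_4 algebra_simps)

lemma gval_gmat_tact_Pmat:
  "gval (gmat A B C) p (tact Pmat x) (tact Pmat y) = gval (gmat A B C) p x y"
  by (simp add: gval_def gmat_def sum_4 algebra_simps)

lemma gval_gmat_tact_Pmat_adjoint:
  "gval (gmat A B C) p (tact Pmat x) y = gval (gmat A B C) p x (tact Pmat y)"
  by (metis gval_gmat_tact_Pmat tact_Pmat_involutive)

lemma gval_gmat_sum_of_squares:
  "gval (gmat A B C) p x x
     = (A p + 2 * B p + C p) * (x$1 + x$2 + x$3 + x$4)\<^sup>2 / 4
     + (A p - 2 * B p + C p) * (x$1 - x$2 + x$3 - x$4)\<^sup>2 / 4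
     + (A p - C p) * ((x$1 - x$3)\<^sup>2 + (x$2 - x$4)\<^sup>2) / 2"
  by (simp add: gval_def gmat_def sum_4 power2_eq_square algebra_simps divide_simps)

lemma gval_gmat_pos:
  assumes "A p > C p" "C p > B p" "B p > 0" "x \<noteq> 0"
  shows "gval (gmat A B C) p x x > 0"
proof -
  define s t u w where "s = x$1 + x$2 + x$3 + x$4" and "t = x$1 - x$2 + x$3 - x$4"
    and "u = x$1 - x$3" and "w = x$2 - x$4"
  have "s \<noteq> 0 \<or> t \<noteq> 0 \<or> u \<noteq> 0 \<or> w \<noteq> 0"
    using \<open>x \<noteq> 0\<close> unfolding s_def t_def u_def w_def vec_eq_iff forall_4 by auto
  then have "(A p + 2 * B p + C p) * s\<^sup>2 / 4 > 0 \<or> (A p - 2 * B p + C p) * t\<^sup>2 / 4 > 0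
      \<or> (A p - C p) * (u\<^sup>2 + w\<^sup>2) / 2 > 0"
    using assms(1-3) by (auto simp: add_pos_nonneg add_nonneg_pos)
  moreover have "(A p + 2 * B p + C p) * s\<^sup>2 / 4 \<ge> 0" "(A p - 2 * B p + C p) * t\<^sup>2 / 4 \<ge> 0"
    "(A p - C p) * (u\<^sup>2 + w\<^sup>2) / 2 \<ge> 0"
    using assms(1-3) by simp_all
  ultimately show ?thesis
    unfolding gval_gmat_sum_of_squares s_def[symmetric] t_def[symmetric] u_def[symmetric]
      w_def[symmetric] by linarith
qed

lemma gval_eq_inner: "gval G p x y = x \<bullet> (G p *v y)"
  unfolding gval_def inner_vec_def matrix_vector_mult_def
  by (simp add: sum_distrib_left mult.assoc)

lemma invertible_if_pos_definite:
  assumes "\<And>x. x \<noteq> 0 \<Longrightarrow> gval G p x x > 0"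
  shows "invertible (G p)"
proof -
  have "x = 0" if "G p *v x = 0" for x
    using assms[of x] that by (auto simp: gval_eq_inner)
  then show ?thesis
    unfolding invertible_left_inverse matrix_left_invertible_ker by blast
qed

lemma matrix_inv_right:
  fixes M :: "'a::semiring_1^'n^'m"
  assumes "invertible M"
  shows "M ** matrix_inv M = mat 1"
  using someI_ex[OF assms[unfolded invertible_def]] unfolding matrix_inv_def by blast

lemma gval_matrix_inv:
  assumes "invertible (G p)" and "\<And>x y. gval G p x y = gval G p y x"
  shows "gval G p (matrix_inv (G p) *v v) z = v \<bullet> z"
proof -
  have "gval G p (matrix_inv (G p) *v v) z = z \<bullet> (G p *v (matrix_inv (G p) *v v))"
    by (subst assms(2)) (simp only: gval_eq_inner)
  also have "\<dots> = v \<bullet> z"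
    by (simp add: matrix_vector_mul_assoc matrix_inv_right[OF assms(1)] inner_commute)
  finally show ?thesis .
qed

definition trilinear :: "(4 \<Rightarrow> 4 \<Rightarrow> 4 \<Rightarrow> real) \<Rightarrow> real^4 \<Rightarrow> real^4 \<Rightarrow> real^4 \<Rightarrow> real" where
  "trilinear d x y z = (\<Sum>i\<in>UNIV. \<Sum>j\<in>UNIV. \<Sum>l\<in>UNIV. x$i * y$j * z$l * d i j l)"

definition contract12 :: "(4 \<Rightarrow> 4 \<Rightarrow> 4 \<Rightarrow> real) \<Rightarrow> real^4 \<Rightarrow> real^4 \<Rightarrow> real^4" where
  "contract12 d x y = (\<chi> l. \<Sum>i\<in>UNIV. \<Sum>j\<in>UNIV. x$i * y$j * d i j l)"

lemma inner_contract12: "contract12 d x y \<bullet> z = trilinear d x y z"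
proof -
  have "contract12 d x y \<bullet> z = (\<Sum>l\<in>UNIV. \<Sum>i\<in>UNIV. \<Sum>j\<in>UNIV. x$i * y$j * z$l * d i j l)"
    unfolding contract12_def inner_vec_def by (simp add: sum_distrib_left sum_distrib_right mult_ac)
  also have "\<dots> = (\<Sum>i\<in>UNIV. \<Sum>l\<in>UNIV. \<Sum>j\<in>UNIV. x$i * y$j * z$l * d i j l)"
    by (rule sum.swap)
  also have "\<dots> = trilinear d x y z"
    unfolding trilinear_def by (rule sum.cong[OF refl sum.swap])
  finally show ?thesis .
qed

lemma trilinear_swap12: "trilinear (\<lambda>i j l. d j i l) x y z = trilinear d y x z"
  unfolding trilinear_def by (subst sum.swap) (simp add: mult_ac)

lemma trilinear_rotate: "trilinear (\<lambda>i j l. d l i j) x y z = trilinear d z x y"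
proof -
  have "trilinear (\<lambda>i j l. d l i j) x y z
      = (\<Sum>i\<in>UNIV. \<Sum>l\<in>UNIV. \<Sum>j\<in>UNIV. x$i * y$j * z$l * d l i j)"
    unfolding trilinear_def by (rule sum.cong[OF refl sum.swap])
  also have "\<dots> = (\<Sum>l\<in>UNIV. \<Sum>i\<in>UNIV. \<Sum>j\<in>UNIV. x$i * y$j * z$l * d l i j)"
    by (rule sum.swap)
  finally show ?thesis
    unfolding trilinear_def by (simp add: mult_ac)
qed

lemma trilinear_linear:
  "trilinear (\<lambda>i j l. (a i j l + b i j l - c i j l) / 2) x y z
     = (trilinear a x y z + trilinear b x y z - trilinear c x y z) / 2"
  unfolding trilinear_def
  by (simp add: ring_distribs sum.distrib sum_subtractf add_divide_distrib diff_divide_distrib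
      flip: sum_divide_distrib)

definition koszul :: "('v \<Rightarrow> 'v \<Rightarrow> 'v \<Rightarrow> real) \<Rightarrow> 'v \<Rightarrow> 'v \<Rightarrow> 'v \<Rightarrow> real" where
  "koszul h x y z = (h x y z + h y x z - h z x y) / 2"

lemma trilinear_koszul_coeffs:
  "trilinear (\<lambda>i j l. (d i j l + d j i l - d l i j) / 2) x y z = koszul (trilinear d) x y z"
  unfolding trilinear_linear trilinear_swap12[of d] trilinear_rotate[of d] koszul_def ..

definition gmat_deriv ::
  "(real^4 \<Rightarrow> real) \<Rightarrow> (real^4 \<Rightarrow> real) \<Rightarrow> (real^4 \<Rightarrow> real) \<Rightarrow> real^4 \<Rightarrow> 4 \<Rightarrow> 4 \<Rightarrow> 4 \<Rightarrow> real"
  where "gmat_deriv A B C p i j l = gmat (pd i A) (pd i B) (pd i C) p $ j $ l"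

lemma pd_gmat_entry: "pd i (\<lambda>q. gmat A B C q $ j $ l) p = gmat_deriv A B C p i j l"
proof -
  have "(\<lambda>q. gmat A B C q $ j $ l) = (if j = l then A else if l = j + 2 then C else B)"
    by (auto simp: gmat_def)
  then show ?thesis
    by (simp add: gmat_deriv_def gmat_def)
qed

lemma chr1_gmat:
  "chr1 (gmat A B C) p
     = (\<lambda>i j l. (gmat_deriv A B C p i j l + gmat_deriv A B C p j i l - gmat_deriv A B C p l i j) / 2)"
  by (intro ext) (simp add: chr1_def pd_gmat_entry)

lemma trilinear_gmat_deriv:
  "trilinear (gmat_deriv A B C p) w u v
     = (\<Sum>i\<in>UNIV. w$i * gval (gmat (pd i A) (pd i B) (pd i C)) p u v)"
  unfolding trilinear_def gmat_deriv_def gval_def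
  by (simp add: sum_distrib_left mult_ac)

lemma trilinear_gmat_deriv_commute:
  "trilinear (gmat_deriv A B C p) w u v = trilinear (gmat_deriv A B C p) w v u"
  unfolding trilinear_gmat_deriv by (simp only: gval_gmat_commute)

lemma trilinear_gmat_deriv_tact_Pmat_adjoint:
  "trilinear (gmat_deriv A B C p) w (tact Pmat u) v
     = trilinear (gmat_deriv A B C p) w u (tact Pmat v)"
  unfolding trilinear_gmat_deriv by (simp only: gval_gmat_tact_Pmat_adjoint)

lemma LC_constant_field: "LC G p x (\<lambda>q. y) = matrix_inv (G p) *v contract12 (chr1 G p) x y"
  unfolding LC_def chr2_def contract12_def matrix_vector_mult_def pd_def
  by (simp add: vec_eq_iff sum_4 algebra_simps)

lemma gval_diff: "gval G p (u - v) z = gval G p u z - gval G p v z"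
  by (simp add: gval_def sum_subtractf left_diff_distrib)

lemma Ften_gmat_koszul:
  assumes "A p > C p" "C p > B p" "B p > 0"
  defines "h \<equiv> trilinear (gmat_deriv A B C p)"
  shows "Ften (gmat A B C) Pmat p x y z = koszul h x (tact Pmat y) z - koszul h x y (tact Pmat z)"
proof -
  let ?G = "gmat A B C"
  have "invertible (?G p)"
    by (intro invertible_if_pos_definite gval_gmat_pos assms(1-3))
  then have inv: "gval ?G p (matrix_inv (?G p) *v v) w = v \<bullet> w" for v w
    using gval_gmat_commute by (rule gval_matrix_inv)
  have "Ften ?G Pmat p x y z
      = contract12 (chr1 ?G p) x (tact Pmat y) \<bullet> z - contract12 (chr1 ?G p) x y \<bullet> tact Pmat z"
    unfolding Ften_def LC_constant_field gval_diff gval_gmat_tact_Pmat_adjoint inv ..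
  then show ?thesis
    unfolding inner_contract12 chr1_gmat trilinear_koszul_coeffs h_def .
qed

lemma koszul_cyclic_sum_eq_0:
  fixes h :: "'v \<Rightarrow> 'v \<Rightarrow> 'v \<Rightarrow> real"
  assumes commute: "\<And>w u v. h w u v = h w v u"
    and adjoint: "\<And>w u v. h w (P u) v = h w u (P v)"
    and involutive: "\<And>u. P (P u) = u"
  shows "(koszul h x (P y) (P z) - koszul h x y (P (P z)))
       + (koszul h y (P z) (P x) - koszul h y z (P (P x)))
       + (koszul h z (P x) (P y) - koszul h z x (P (P y))) = 0"
proof -
  have isometry: "h a (P b) (P c) = h a b c" for a b c
    using adjoint[of a b "P c"] involutive by simp
  have swap: "h (P a) b (P c) = h (P a) c (P b)" for a b c
    using adjoint[of "P a" b c] commute[of "P a" "P b" c] commute[of "P a" b "P c"] by simp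
  show ?thesis
    unfolding koszul_def involutive isometry
    using swap[of y x z] swap[of z y x] swap[of x z y]
      commute[of y x z] commute[of z y x] commute[of x z y]
    by (simp only:) (simp add: field_simps)
qed

theorem lemma3p1:
  fixes U :: "(real^4) set" and A B C :: "real^4 \<Rightarrow> real"
  assumes "open U"
    and "smooth_fun_on U A" and "smooth_fun_on U B" and "smooth_fun_on U C"
    and "\<And>p. p \<in> U \<Longrightarrow> A p > C p \<and> C p > B p \<and> B p > 0"
  shows "Pmat = (\<chi> j k. if k = j + 2 then 1 else 0)
    \<and> Pmat ** Pmat = mat 1 \<and> Pmat \<noteq> mat 1 \<and> Pmat \<noteq> - mat 1 \<and> trace Pmat = 0
    \<and> (\<forall>p\<in>U. \<forall>x. x \<noteq> 0 \<longrightarrow> gval (gmat A B C) p x x > 0)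
    \<and> (\<forall>p\<in>U. \<forall>x y. gval (gmat A B C) p (tact Pmat x) (tact Pmat y) = gval (gmat A B C) p x y)
    \<and> (\<forall>p\<in>U. \<forall>x y z.
         Ften (gmat A B C) Pmat p x y (tact Pmat z) + Ften (gmat A B C) Pmat p y z (tact Pmat x)
       + Ften (gmat A B C) Pmat p z x (tact Pmat y) = 0)"
proof -
  have pos: "\<forall>p\<in>U. \<forall>x. x \<noteq> 0 \<longrightarrow> gval (gmat A B C) p x x > 0"
    using assms(5) by (blast intro: gval_gmat_pos)
  have cyclic: "\<forall>p\<in>U. \<forall>x y z.
      Ften (gmat A B C) Pmat p x y (tact Pmat z) + Ften (gmat A B C) Pmat p y z (tact Pmat x)
    + Ften (gmat A B C) Pmat p z x (tact Pmat y) = 0"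
    using assms(5)
    by (auto simp only: Ften_gmat_koszul intro!: koszul_cyclic_sum_eq_0
        trilinear_gmat_deriv_commute trilinear_gmat_deriv_tact_Pmat_adjoint tact_Pmat_involutive)
  have isometry:
    "\<forall>p\<in>U. \<forall>x y. gval (gmat A B C) p (tact Pmat x) (tact Pmat y) = gval (gmat A B C) p x y"
    by (simp add: gval_gmat_tact_Pmat)
  show ?thesis
    using Pmat_eq Pmat_squared Pmat_neq_pm_identity trace_Pmat pos isometry cyclic
    by (intro conjI)
qed

end
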